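(* Let $B$, $C$ be unital $\mathrm{C}^*$-algebras, let $\{\phi_i\}_{i=1}^m$, $\{\psi_j\}_{j=1}^n$ be families of surjective $*$-homomorphisms $B\to C$, and let $[c_{ij}]\in M_{m,n}(C)$ satisfy $\phi_i(b)c_{ij}=c_{ij}\psi_j(b)$ for all $b\in B$, $1\le i\le m$, $1\le j\le n$. (i) If $F_\pi\in M_n(C)$ is the permutation matrix of a permutation $\pi\in S_n$ (so that $[c_{ij}]F_\pi$ has $(i,j)$ entry $c_{i\pi(j)}$), then $[c_{ij}]F_\pi$ intertwines $\{\phi_i\}_{i=1}^m$ and $\{\psi_{\pi(j)}\}_{j=1}^n$, i.e. $\phi_i(b)c_{i\pi(j)}=c_{i\pi(j)}\psi_{\pi(j)}(b)$ for all $b,i,j$. (ii) If $c_{kk}$ is invertible, $h\ne k$, and $E_{hk}\in M_m(C)$ is the matrix of the elementary row operation that adds the $k$-th row multiplied on the left by $-c_{hk}c_{kk}^{-1}$ to the $h$-th row, then $E_{hk}[c_{ij}]=[c'_{ij}]$ again satisfies $\phi_i(b)c'_{ij}=c'_{ij}\psi_j(b)$ for all $b\in B$, $1\le i\le m$, $1\le j\le n$. *)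

theory Defs
  imports Complex_Main "HOL-Combinatorics.Permutations"
begin

class cstar_algebra = banach + real_normed_algebra_1 +
  fixes scaleC :: "complex \<Rightarrow> 'a \<Rightarrow> 'a"
    and adj :: "'a \<Rightarrow> 'a"
  assumes scaleC_of_real: "scaleC (complex_of_real r) x = scaleR r x"
    and scaleC_add_right: "scaleC a (x + y) = scaleC a x + scaleC a y"
    and scaleC_add_left: "scaleC (a + b) x = scaleC a x + scaleC b x"
    and scaleC_scaleC: "scaleC a (scaleC b x) = scaleC (a * b) x"
    and scaleC_one: "scaleC 1 x = x"
    and scaleC_mult_left: "scaleC a (x * y) = scaleC a x * y"
    and scaleC_mult_right: "scaleC a (x * y) = x * scaleC a y"
    and norm_scaleC: "norm (scaleC a x) = cmod a * norm x"
    and adj_adj: "adj (adj x) = x"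
    and adj_add: "adj (x + y) = adj x + adj y"
    and adj_mult: "adj (x * y) = adj y * adj x"
    and adj_scaleC: "adj (scaleC a x) = scaleC (cnj a) (adj x)"
    and cstar_identity: "norm (adj x * x) = (norm x)\<^sup>2"

definition star_hom :: "('b::cstar_algebra \<Rightarrow> 'c::cstar_algebra) \<Rightarrow> bool" where
  "star_hom f \<longleftrightarrow>
     (\<forall>x y. f (x + y) = f x + f y) \<and>
     (\<forall>a x. f (scaleC a x) = scaleC a (f x)) \<and>
     (\<forall>x y. f (x * y) = f x * f y) \<and>
     (\<forall>x. f (adj x) = adj (f x))"

text \<open>Matrices over a ring, indexed from 1: functions nat \<Rightarrow> nat \<Rightarrow> 'a,
with explicit sizes.\<close>
definition matmul :: "nat \<Rightarrow> (nat \<Rightarrow> nat \<Rightarrow> 'a::semiring_0) \<Rightarrow> (nat \<Rightarrow> nat \<Rightarrow> 'a) \<Rightarrow> nat \<Rightarrow> nat \<Rightarrow> 'a" where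
  "matmul k A B = (\<lambda>i j. \<Sum>l=1..k. A i l * B l j)"

definition perm_matrix :: "(nat \<Rightarrow> nat) \<Rightarrow> nat \<Rightarrow> nat \<Rightarrow> 'a::zero_neq_one" where
  "perm_matrix \<pi> = (\<lambda>i j. if i = \<pi> j then 1 else 0)"

definition invertible_elem :: "'a::ring_1 \<Rightarrow> bool" where
  "invertible_elem x \<longleftrightarrow> (\<exists>y. x * y = 1 \<and> y * x = 1)"

definition inv_elem :: "'a::ring_1 \<Rightarrow> 'a" where
  "inv_elem x = (THE y. x * y = 1 \<and> y * x = 1)"

definition elem_row_matrix :: "nat \<Rightarrow> nat \<Rightarrow> (nat \<Rightarrow> nat \<Rightarrow> 'a::ring_1) \<Rightarrow> nat \<Rightarrow> nat \<Rightarrow> 'a" where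
  "elem_row_matrix h k c = (\<lambda>i j. (if i = j then 1 else 0)
      + (if i = h \<and> j = k then - (c h k * inv_elem (c k k)) else 0))"

definition intertwines ::
  "nat \<Rightarrow> nat \<Rightarrow> (nat \<Rightarrow> 'b \<Rightarrow> 'c::ring) \<Rightarrow> (nat \<Rightarrow> 'b \<Rightarrow> 'c) \<Rightarrow> (nat \<Rightarrow> nat \<Rightarrow> 'c) \<Rightarrow> bool" where
  "intertwines m n \<phi> \<psi> c \<longleftrightarrow>
     (\<forall>b. \<forall>i\<in>{1..m}. \<forall>j\<in>{1..n}. \<phi> i b * c i j = c i j * \<psi> j b)"

end

theory Submission
  imports Defs
begin

text \<open>Both matrix operations only rearrange entries or add left multiples of one row to
another, and intertwining relations \<open>p * a = a * q\<close> are preserved by sums, negation,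
products \<open>p * a * b = a * b * r\<close> and inverses. The multiplier \<open>c\<^sub>h\<^sub>k c\<^sub>k\<^sub>k\<^sup>-\<^sup>1\<close> chains
\<open>\<phi>\<^sub>h \<rightarrow> \<psi>\<^sub>k \<rightarrow> \<phi>\<^sub>k\<close>, so the new row \<open>h\<close> still intertwines \<open>\<phi>\<^sub>h\<close> with \<open>\<psi>\<close>.\<close>

lemma invertible_elem_inv_elem:
  fixes x :: "'a::ring_1"
  assumes "invertible_elem x"
  shows "x * inv_elem x = 1" and "inv_elem x * x = 1"
proof -
  obtain y where y: "x * y = 1" "y * x = 1"
    using assms unfolding invertible_elem_def by blast
  have "inv_elem x = y"
    unfolding inv_elem_def
  proof (rule the_equality)
    fix z assume "x * z = 1 \<and> z * x = 1"
    then have "z = (y * x) * z" and "y * (x * z) = y" using y by simp_all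
    then show "z = y" by (simp add: mult.assoc)
  qed (use y in simp)
  with y show "x * inv_elem x = 1" and "inv_elem x * x = 1" by simp_all
qed

lemma intertwining_add:
  fixes p a b q :: "'a::ring"
  assumes "p * a = a * q" and "p * b = b * q"
  shows "p * (a + b) = (a + b) * q"
  using assms by (simp add: distrib_left distrib_right)

lemma intertwining_uminus:
  fixes p a q :: "'a::ring"
  assumes "p * a = a * q"
  shows "p * (- a) = (- a) * q"
  using assms by simp

lemma intertwining_mult:
  fixes p a q b r :: "'a::ring"
  assumes "p * a = a * q" and "q * b = b * r"
  shows "p * (a * b) = (a * b) * r"
  using assms by (metis mult.assoc)

lemma intertwining_inv_elem:
  fixes p a q :: "'a::ring_1"
  assumes "p * a = a * q" and "invertible_elem a"
  shows "q * inv_elem a = inv_elem a * p"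
proof -
  note inv = invertible_elem_inv_elem[OF assms(2)]
  have "q * inv_elem a = inv_elem a * (a * q) * inv_elem a"
    using inv by (simp add: mult.assoc[symmetric])
  also have "\<dots> = inv_elem a * p * (a * inv_elem a)"
    using assms(1) by (metis mult.assoc)
  finally show ?thesis using inv by simp
qed

lemma matmul_perm_matrix:
  fixes c :: "nat \<Rightarrow> nat \<Rightarrow> 'a::semiring_1"
  assumes "\<pi> j \<in> {1..n}"
  shows "matmul n c (perm_matrix \<pi>) i j = c i (\<pi> j)"
proof -
  have "matmul n c (perm_matrix \<pi>) i j = (\<Sum>l=1..n. if \<pi> j = l then c i l else 0)"
    unfolding matmul_def perm_matrix_def by (rule sum.cong) auto
  also have "\<dots> = c i (\<pi> j)" using assms by (simp add: sum.delta)
  finally show ?thesis .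
qed

lemma matmul_elem_row_matrix:
  fixes c d :: "nat \<Rightarrow> nat \<Rightarrow> 'a::ring_1"
  assumes "i \<in> {1..m}" and "k \<in> {1..m}"
  shows "matmul m (elem_row_matrix h k c) d i j
           = d i j + (if i = h then - (c h k * inv_elem (c k k)) * d k j else 0)"
proof -
  have "matmul m (elem_row_matrix h k c) d i j
      = (\<Sum>l=1..m. if i = l then d l j else 0)
        + (\<Sum>l=1..m. if k = l then (if i = h then - (c h k * inv_elem (c k k)) * d l j else 0) else 0)"
    unfolding matmul_def elem_row_matrix_def sum.distrib[symmetric]
    by (rule sum.cong) (auto simp: distrib_right)
  then show ?thesis using assms by (simp add: sum.delta)
qed

lemma intertwines_perm_matrix:
  fixes c :: "nat \<Rightarrow> nat \<Rightarrow> 'c::ring_1"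
  assumes "intertwines m n \<phi> \<psi> c" and "\<pi> permutes {1..n}"
  shows "intertwines m n \<phi> (\<lambda>j. \<psi> (\<pi> j)) (matmul n c (perm_matrix \<pi>))"
  unfolding intertwines_def
proof (intro allI ballI)
  fix b i j assume "i \<in> {1..m}" and "j \<in> {1..n}"
  moreover from \<open>j \<in> {1..n}\<close> have "\<pi> j \<in> {1..n}"
    using permutes_in_image[OF assms(2)] by blast
  ultimately show "\<phi> i b * matmul n c (perm_matrix \<pi>) i j
                     = matmul n c (perm_matrix \<pi>) i j * \<psi> (\<pi> j) b"
    using assms(1) by (simp add: matmul_perm_matrix intertwines_def)
qed

lemma intertwines_elem_row_matrix:
  fixes c :: "nat \<Rightarrow> nat \<Rightarrow> 'c::ring_1"
  assumes intw: "intertwines m n \<phi> \<psi> c"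
    and k: "k \<in> {1..m}" "k \<in> {1..n}" and inv: "invertible_elem (c k k)"
  shows "intertwines m n \<phi> \<psi> (matmul m (elem_row_matrix h k c) c)"
  unfolding intertwines_def
proof (intro allI ballI)
  fix b i j assume i: "i \<in> {1..m}" and j: "j \<in> {1..n}"
  have c: "\<phi> i' b * c i' j' = c i' j' * \<psi> j' b" if "i' \<in> {1..m}" "j' \<in> {1..n}" for i' j'
    using intw that unfolding intertwines_def by blast
  let ?e = "- (c h k * inv_elem (c k k)) * c k j"
  have row_h: "\<phi> i b * ?e = ?e * \<psi> j b" if "i = h"
  proof (rule intertwining_mult[OF intertwining_uminus[OF intertwining_mult]])
    show "\<phi> i b * c h k = c h k * \<psi> k b" using c i k that by blast
    show "\<psi> k b * inv_elem (c k k) = inv_elem (c k k) * \<phi> k b"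
      using intertwining_inv_elem[OF c inv] k by blast
    show "\<phi> k b * c k j = c k j * \<psi> j b" using c j k by blast
  qed
  show "\<phi> i b * matmul m (elem_row_matrix h k c) c i j
          = matmul m (elem_row_matrix h k c) c i j * \<psi> j b"
  proof (cases "i = h")
    case True
    show ?thesis
      unfolding matmul_elem_row_matrix[OF i k(1)] if_P[OF True]
      by (rule intertwining_add[OF c[OF i j] row_h[OF True]])
  qed (simp add: matmul_elem_row_matrix[OF i k(1)] c[OF i j])
qed

theorem lemma3p2:
  fixes \<phi> \<psi> :: "nat \<Rightarrow> 'b::cstar_algebra \<Rightarrow> 'c::cstar_algebra"
    and c :: "nat \<Rightarrow> nat \<Rightarrow> 'c"
    and m n :: nat
  assumes phi_hom: "\<forall>i\<in>{1..m}. star_hom (\<phi> i) \<and> surj (\<phi> i)"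
    and psi_hom: "\<forall>j\<in>{1..n}. star_hom (\<psi> j) \<and> surj (\<psi> j)"
    and intw: "intertwines m n \<phi> \<psi> c"
  shows "(\<forall>\<pi>. \<pi> permutes {1..n} \<longrightarrow>
            intertwines m n \<phi> (\<lambda>j. \<psi> (\<pi> j)) (matmul n c (perm_matrix \<pi>)))
       \<and> (\<forall>h k. h \<in> {1..m} \<and> k \<in> {1..m} \<and> k \<in> {1..n} \<and> h \<noteq> k
               \<and> invertible_elem (c k k) \<longrightarrow>
            intertwines m n \<phi> \<psi> (matmul m (elem_row_matrix h k c) c))"
  using intertwines_perm_matrix[OF intw] intertwines_elem_row_matrix[OF intw] by blast

end
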